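(* Let $v_1\ge v_2>0$, $m\in\mathbb{Z}_{\ge1}$ and $0<b\le m$. Let $(X,Y)$ be a strategy profile with $\mathbf{E}(X)=m$ and $\mathbf{E}(Y)=b$ such that: $m=v_2/2$; $(X,Y)$ is a Nash equilibrium of the General Lotto game $\Gamma(m,b)$; $X=U_{\mathrm{O}}^m$; and $Y=\left(1-\frac bm\right)\delta_0+\frac bm Z$ where (a) if $m=1$: $Z=\lambda_{\mathrm{O}}U_{\mathrm{O}}^1+\lambda_{\mathrm{E}}U_{\mathrm{E}}^1$ with $\lambda_{\mathrm{O}},\lambda_{\mathrm{E}}\ge0$, $\lambda_{\mathrm{O}}+\lambda_{\mathrm{E}}=1$, $\frac{\lambda_{\mathrm{E}}}{2}\ge1-\frac{2}{bv_1}$ and $\frac{\lambda_{\mathrm{E}}}{2}\le\frac1b-\frac{2}{bv_1}$; (b) if $m\ge2$: $Z=\lambda_{\mathrm{O}}U_{\mathrm{O}}^m+\lambda_{\mathrm{E}}U_{\mathrm{E}}^m+\lambda_{\mathrm{O}\uparrow1}U_{\mathrm{O}\uparrow1}^m+\sum_{j=1}^{m-1}\lambda_jW_j^m$ with $\lambda_{\mathrm{O}},\lambda_{\mathrm{E}},\lambda_{\mathrm{O}\uparrow1},\lambda_1,\dots,\lambda_{m-1}\ge0$, $\lambda_{\mathrm{O}}+\lambda_{\mathrm{E}}+\lambda_{\mathrm{O}\uparrow1}+\sum_{j=1}^{m-1}\lambda_j=1$, $\frac{\lambda_{\mathrm{E}}}{m+1}+\frac{1}{2m}\sum_{j=1}^{m-1}\lambda_j\le\frac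 mb\left(1-\frac{v_2}{v_1}\right)$, $\frac{\lambda_{\mathrm{O}}}{m}+\frac{\lambda_{\mathrm{E}}}{m+1}+\frac{\lambda_{\mathrm{O}\uparrow1}}{m-1}+\frac{1}{m}\sum_{j=1}^{m-1}\lambda_j=\frac{2m}{bv_1}$, and, in the case $b>m-1$, $\frac{1}{2m}\sum_{j=1}^{m-1}\lambda_j+\frac{\lambda_{\mathrm{O}\uparrow1}}{m-1}\le\frac{m-b}{b}$. Then $(X,Y)$ is a Nash equilibrium of the discrete all-pay auction with valuations $v_1,v_2$.
   Context: Discrete all-pay auction: two players, 1 and 2, value a prize at $v_1$ and $v_2$ respectively, where $v_1\ge v_2>0$. A (mixed) strategy is a probability distribution on $\mathbb{Z}_{\ge 0}$ with finite mean, identified with a $\mathbb{Z}_{\ge0}$-valued random variable; the two players' choices are independent. If player 1 uses $X$ and player 2 uses $Y$, the expected payoffs are $P^1(X,Y)=v_1\Pr(X>Y)+\frac{v_1}{2}\Pr(X=Y)-\mathbf{E}(X)$ and $P^2(Y,X)=v_2\Pr(Y>X)+\frac{v_2}{2}\Pr(X=Y)-\mathbf{E}(Y)$. A Nash equilibrium of the all-pay auction is a pair $(X,Y)$ with $P^1(X,Y)\ge P^1(X',Y)$ and $P^2(Y,X)\ge P^2(Y',X)$ for all strategies $X',Y'$. $\delta_j$ denotes the point mass at $j$; $\lambda A+(1-\lambda)B$ denotes the mixture of distributions $A$ and $B$ (similarly for longer convex combinations). Discrete General Lotto game: for reals $a,b\ge 0$, in $\Gamma(a,b)$ player 1 chooses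 a distribution $X$ on $\mathbb{Z}_{\ge0}$ with $\mathbf{E}(X)=a$ and player 2 chooses a distribution $Y$ on $\mathbb{Z}_{\ge 0}$ with $\mathbf{E}(Y)=b$ (independently); the payoff to player 1 is $H(X,Y)=\Pr(X>Y)-\Pr(X<Y)$ and to player 2 is $H(Y,X)=-H(X,Y)$. A Nash equilibrium of $\Gamma(a,b)$ is a pair $(X,Y)$ from these strategy sets such that neither player can increase her payoff by switching to another strategy in her own strategy set. Special distributions: for $m\ge1$, $U_{\mathrm{O}}^m$ is the uniform distribution on $\{1,3,\dots,2m-1\}$; for $m\ge0$, $U_{\mathrm{E}}^m$ is the uniform distribution on $\{0,2,\dots,2m\}$; for $m\ge2$, $U_{\mathrm{O}\uparrow1}^m$ is the uniform distribution on $\{2,4,\dots,2m-2\}$; for $m\ge2$ and $1\le j\le m-1$, $W_j^m=\frac{1}{2m}\delta_0+\sum_{i=1}^{j-1}\frac1m\delta_{2i}+\frac{1}{2m}\delta_{2j}+\sum_{i=j+1}^{m}\frac1m\delta_{2i-1}$. *)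

theory Defs
  imports "HOL-Probability.Probability"
begin

definition strategy :: "nat pmf \<Rightarrow> bool" where
  "strategy p \<longleftrightarrow> integrable (measure_pmf p) (real :: nat \<Rightarrow> real)"

definition mean :: "nat pmf \<Rightarrow> real" where
  "mean p = measure_pmf.expectation p (real :: nat \<Rightarrow> real)"

definition prob_gt :: "nat pmf \<Rightarrow> nat pmf \<Rightarrow> real" where
  "prob_gt X Y = measure_pmf.prob (pair_pmf X Y) {(x, y). y < x}"

definition prob_eq :: "nat pmf \<Rightarrow> nat pmf \<Rightarrow> real" where
  "prob_eq X Y = measure_pmf.prob (pair_pmf X Y) {(x, y). x = y}"

definition allpay_payoff :: "real \<Rightarrow> nat pmf \<Rightarrow> nat pmf \<Rightarrow> real" where
  "allpay_payoff v X Y = v * prob_gt X Y + v / 2 * prob_eq X Y - mean X"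

definition allpay_NE :: "real \<Rightarrow> real \<Rightarrow> nat pmf \<Rightarrow> nat pmf \<Rightarrow> bool" where
  "allpay_NE v1 v2 X Y \<longleftrightarrow> strategy X \<and> strategy Y \<and>
     (\<forall>X'. strategy X' \<longrightarrow> allpay_payoff v1 X' Y \<le> allpay_payoff v1 X Y) \<and>
     (\<forall>Y'. strategy Y' \<longrightarrow> allpay_payoff v2 Y' X \<le> allpay_payoff v2 Y X)"

definition lotto_H :: "nat pmf \<Rightarrow> nat pmf \<Rightarrow> real" where
  "lotto_H X Y = prob_gt X Y - prob_gt Y X"

definition lotto_NE :: "real \<Rightarrow> real \<Rightarrow> nat pmf \<Rightarrow> nat pmf \<Rightarrow> bool" where
  "lotto_NE a b X Y \<longleftrightarrow>
     strategy X \<and> mean X = a \<and> strategy Y \<and> mean Y = b \<and>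
     (\<forall>X'. strategy X' \<and> mean X' = a \<longrightarrow> lotto_H X' Y \<le> lotto_H X Y) \<and>
     (\<forall>Y'. strategy Y' \<and> mean Y' = b \<longrightarrow> lotto_H Y' X \<le> lotto_H Y X)"

definition U_O :: "nat \<Rightarrow> nat pmf" where
  "U_O m = pmf_of_set ((\<lambda>i. 2 * i + 1) ` {..<m})"

definition U_E :: "nat \<Rightarrow> nat pmf" where
  "U_E m = pmf_of_set ((\<lambda>i. 2 * i) ` {..m})"

definition U_O_up1 :: "nat \<Rightarrow> nat pmf" where
  "U_O_up1 m = pmf_of_set ((\<lambda>i. 2 * i) ` {1..m-1})"

text \<open>Mass function of W_j^m (for m \<ge> 2, 1 \<le> j \<le> m-1).\<close>
definition W_mass :: "nat \<Rightarrow> nat \<Rightarrow> nat \<Rightarrow> real" where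
  "W_mass j m k =
     (if k = 0 then 1 / (2 * real m)
      else if (\<exists>i. 1 \<le> i \<and> i \<le> j - 1 \<and> k = 2 * i) then 1 / real m
      else if k = 2 * j then 1 / (2 * real m)
      else if (\<exists>i. j + 1 \<le> i \<and> i \<le> m \<and> k = 2 * i - 1) then 1 / real m
      else 0)"

definition W :: "nat \<Rightarrow> nat \<Rightarrow> nat pmf" where
  "W j m = embed_pmf (\<lambda>k. W_mass j m k)"

end

theory Submission
  imports Defs
begin

text \<open>Against a mixed strategy \<open>Y\<close>, a bid \<open>x\<close> of a player with value \<open>v\<close> earns
  \<open>v G\<^sub>Y(x) - x\<close> in expectation, where \<open>G\<^sub>Y(x) = Pr(Y < x) + Pr(Y = x)/2\<close>; hence a strategy is a best
  response as soon as this pure payoff attains its maximum everywhere on its support.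
  For \<open>X = U\<^sub>O\<^sup>m\<close> one finds \<open>G\<^sub>X(y) = min(y, 2m)/(2m)\<close>, so with \<open>v\<^sub>2 = 2m\<close> player 2's pure payoff
  \<open>min(y, 2m) - y\<close> vanishes on \<open>[0, 2m]\<close>, which contains the support of \<open>Y\<close>.
  For player 1, the mid-cdf \<open>G\<close> of every component of \<open>Y\<close> lies below an affine function of the bid that
  is exact at the odd bids below \<open>2m\<close>. The equality constraint on the weights gives the combined affine
  bound slope \<open>1/v\<^sub>1\<close>, so \<open>v\<^sub>1 G\<^sub>Y(x) - x\<close> is constant on the support of \<open>X\<close> and no larger at other
  positive bids, while the last inequality of case (b) (automatic when \<open>b \<le> m - 1\<close>) covers the bid 0.
  For \<open>m = 1\<close> the two inequalities of case (a) compare the bids 0 and 2 with the bid 1 directly.\<close>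

section \<open>The payoff of a pure bid\<close>

lemma prob_pair_pmf:
  "measure_pmf.prob (pair_pmf A B) S =
     measure_pmf.expectation A (\<lambda>a. measure_pmf.prob B {b. (a, b) \<in> S})"
proof -
  have "emeasure (pair_pmf A B) S = (\<integral>\<^sup>+a. emeasure B {b. (a, b) \<in> S} \<partial>A)"
    by (simp add: pair_pmf_def nn_integral_indicator[symmetric] indicator_def
        del: nn_integral_indicator)
  also have "\<dots> = ennreal (measure_pmf.expectation A (\<lambda>a. measure_pmf.prob B {b. (a, b) \<in> S}))"
    by (simp add: measure_pmf.emeasure_eq_measure)
       (rule nn_integral_eq_integral, auto intro!: measure_pmf.integrable_const_bound[where B=1])
  finally show ?thesis
    by (simp add: measure_pmf.emeasure_eq_measure integral_nonneg_AE)
qed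

text \<open>\<open>mid_cdf (pmf Y) x\<close> is the probability of winning with the bid \<open>x\<close> against \<open>Y\<close>, a tie counting
  as half a win.\<close>
definition mid_cdf :: "(nat \<Rightarrow> real) \<Rightarrow> nat \<Rightarrow> real" where
  "mid_cdf f x = (\<Sum>k<x. f k) + f x / 2"

definition pure_payoff :: "real \<Rightarrow> nat pmf \<Rightarrow> nat \<Rightarrow> real" where
  "pure_payoff v Y x = v * mid_cdf (pmf Y) x - real x"

lemma integrable_pure_payoff:
  assumes "strategy X"
  shows "integrable X (pure_payoff v Y)"
proof -
  have "integrable X (\<lambda>x. measure_pmf.prob Y {..<x})" "integrable X (pmf Y)"
    by (auto intro!: measure_pmf.integrable_const_bound[where B=1] pmf_le_1)
  then show ?thesis
    using assms unfolding strategy_def pure_payoff_def mid_cdf_def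
    by (simp add: measure_measure_pmf_finite)
qed

lemma allpay_payoff_eq_expectation:
  assumes "strategy X"
  shows "allpay_payoff v X Y = measure_pmf.expectation X (pure_payoff v Y)"
proof -
  have gt: "prob_gt X Y = measure_pmf.expectation X (\<lambda>x. measure_pmf.prob Y {..<x})"
    unfolding prob_gt_def prob_pair_pmf by (simp add: lessThan_def)
  have eq: "prob_eq X Y = measure_pmf.expectation X (pmf Y)"
    unfolding prob_eq_def prob_pair_pmf by (simp add: eq_commute measure_pmf_single)
  have "integrable X (\<lambda>x. measure_pmf.prob Y {..<x})" "integrable X (pmf Y)"
    by (auto intro!: measure_pmf.integrable_const_bound[where B=1] pmf_le_1)
  then show ?thesis
    using assms unfolding allpay_payoff_def pure_payoff_def mid_cdf_def gt eq mean_def strategy_def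
    by (simp add: measure_measure_pmf_finite algebra_simps)
qed

lemma best_response_of_pure_payoff_bound:
  assumes "strategy X'" "strategy X"
    and "\<And>x. pure_payoff v Y x \<le> K" "\<And>x. x \<in> set_pmf X \<Longrightarrow> pure_payoff v Y x = K"
  shows "allpay_payoff v X' Y \<le> allpay_payoff v X Y"
proof -
  have "allpay_payoff v X' Y \<le> measure_pmf.expectation X' (\<lambda>_. K)"
    unfolding allpay_payoff_eq_expectation[OF assms(1)]
    by (rule integral_mono) (use integrable_pure_payoff[OF assms(1)] assms(3) in auto)
  also have "\<dots> = measure_pmf.expectation X (pure_payoff v Y)"
    by (subst integral_cong_AE[where g="\<lambda>_. K"]) (auto simp: AE_measure_pmf_iff assms(4))
  finally show ?thesis
    unfolding allpay_payoff_eq_expectation[OF assms(2)] .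
qed

section \<open>Mid-cdfs of the special distributions\<close>

lemma mid_cdf_add: "mid_cdf (\<lambda>k. f k + g k) x = mid_cdf f x + mid_cdf g x"
  unfolding mid_cdf_def by (simp add: sum.distrib)

lemma mid_cdf_cmult: "mid_cdf (\<lambda>k. a * f k) x = a * mid_cdf f x"
  unfolding mid_cdf_def by (simp add: sum_distrib_left algebra_simps)

lemma mid_cdf_sum: "mid_cdf (\<lambda>k. \<Sum>j\<in>J. h j k) x = (\<Sum>j\<in>J. mid_cdf (h j) x)"
  unfolding mid_cdf_def by (simp add: sum.swap[of _ J] sum.distrib sum_divide_distrib)

definition mid_count :: "(nat \<Rightarrow> nat) \<Rightarrow> nat \<Rightarrow> nat" where
  "mid_count c x = 2 * (\<Sum>k<x. c k) + c x"

lemma mid_cdf_count: "mid_cdf (\<lambda>k. real (c k) / D) x = real (mid_count c x) / (2 * D)"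
  unfolding mid_cdf_def mid_count_def
  by (cases "D = 0") (simp_all add: sum_divide_distrib[symmetric] field_simps)

lemma mid_count_eqI:
  assumes "h 0 = c 0" "\<And>x. h (Suc x) = h x + (c x + c (Suc x))"
  shows "mid_count c x = h x"
  by (induction x) (simp_all add: mid_count_def assms)

text \<open>The masses of \<open>U\<^sub>O\<^sup>m\<close>, \<open>U\<^sub>E\<^sup>m\<close>, \<open>U\<^sub>O\<^sub>\<up>\<^sub>1\<^sup>m\<close> and \<open>W\<^sub>j\<^sup>m\<close>, multiplied by \<open>m\<close>, \<open>m + 1\<close>, \<open>m - 1\<close> and \<open>2m\<close>
  respectively.\<close>
definition count_O :: "nat \<Rightarrow> nat \<Rightarrow> nat" where
  "count_O m k = of_bool (odd k \<and> k < 2 * m)"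

definition count_E :: "nat \<Rightarrow> nat \<Rightarrow> nat" where
  "count_E m k = of_bool (even k \<and> k \<le> 2 * m)"

definition count_O_up1 :: "nat \<Rightarrow> nat \<Rightarrow> nat" where
  "count_O_up1 m k = of_bool (even k \<and> 2 \<le> k \<and> k \<le> 2 * m - 2)"

definition count_W :: "nat \<Rightarrow> nat \<Rightarrow> nat \<Rightarrow> nat" where
  "count_W j m k =
     (if k = 0 \<or> k = 2 * j then 1
      else if even k \<and> k < 2 * j \<or> odd k \<and> 2 * j < k \<and> k < 2 * m then 2 else 0)"

lemma mid_count_delta0: "mid_count (\<lambda>k. of_bool (k = 0)) x = (if x = 0 then 1 else 2)"
  by (rule mid_count_eqI) auto

lemma mid_count_O: "mid_count (count_O m) x = min x (2 * m)"
proof (rule mid_count_eqI)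
  fix x
  have "count_O m x + count_O m (Suc x) = of_bool (x < 2 * m)"
    unfolding count_O_def of_bool_def by presburger
  then show "min (Suc x) (2 * m) = min x (2 * m) + (count_O m x + count_O m (Suc x))"
    by (auto simp: of_bool_def)
qed (simp add: count_O_def)

lemma mid_count_E: "mid_count (count_E m) x = min (x + 1) (2 * m + 2)"
proof (rule mid_count_eqI)
  fix x
  have "count_E m x + count_E m (Suc x) = of_bool (x \<le> 2 * m)"
    unfolding count_E_def of_bool_def by presburger
  then show "min (Suc x + 1) (2 * m + 2) =
      min (x + 1) (2 * m + 2) + (count_E m x + count_E m (Suc x))"
    by (auto simp: of_bool_def)
qed (simp add: count_E_def)

lemma mid_count_O_up1:
  assumes "m \<ge> 2"
  shows "mid_count (count_O_up1 m) x = min (x - 1) (2 * m - 2)"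
proof (rule mid_count_eqI)
  fix x
  have "count_O_up1 m x + count_O_up1 m (Suc x) = of_bool (1 \<le> x \<and> x \<le> 2 * m - 2)"
    unfolding count_O_up1_def of_bool_def using assms by presburger
  then show "min (Suc x - 1) (2 * m - 2) =
      min (x - 1) (2 * m - 2) + (count_O_up1 m x + count_O_up1 m (Suc x))"
    by (auto simp: of_bool_def)
qed (simp add: count_O_up1_def)

lemma count_W_add_Suc:
  assumes "1 \<le> j" "j < m"
  shows "count_W j m x + count_W j m (Suc x) =
      (if x = 0 \<or> Suc x = 2 * j then 1 else if x = 2 * j then 3 else if x < 2 * m then 2 else 0)"
proof (cases "even x")
  case True
  then obtain t where "x = 2 * t" by blast
  then show ?thesis using assms unfolding count_W_def by auto
next
  case False
  then obtain t where "x = 2 * t + 1" by (blast elim: oddE)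
  then show ?thesis using assms unfolding count_W_def by (auto; presburger)
qed

lemma mid_count_W:
  assumes "1 \<le> j" "j < m"
  shows "mid_count (count_W j m) x =
    (if x = 0 then 1 else if x = 2 * j then 2 * x - 1 else min (2 * x) (4 * m))"
  by (rule mid_count_eqI) (use assms count_W_add_Suc[OF assms] in \<open>auto simp: count_W_def\<close>)

lemma pmf_U_O:
  assumes "m \<ge> 1"
  shows "pmf (U_O m) k = real (count_O m k) / real m"
proof -
  let ?S = "(\<lambda>i. 2 * i + 1) ` {..<m}"
  have "?S = {k. odd k \<and> k < 2 * m}"
    by (auto elim!: oddE intro: image_eqI)
  moreover have "card ?S = m"
    by (subst card_image) (auto simp: inj_on_def)
  moreover have "pmf (U_O m) k = indicator ?S k / card ?S"
    unfolding U_O_def by (rule pmf_of_set) (use assms in \<open>auto simp: lessThan_empty_iff\<close>)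
  ultimately show ?thesis
    by (simp add: count_O_def indicator_def)
qed

lemma pmf_U_E: "pmf (U_E m) k = real (count_E m k) / (real m + 1)"
proof -
  let ?S = "(\<lambda>i. 2 * i) ` {..m}"
  have "?S = {k. even k \<and> k \<le> 2 * m}"
    by (auto elim!: evenE)
  moreover have "card ?S = m + 1"
    by (subst card_image) (auto simp: inj_on_def)
  moreover have "pmf (U_E m) k = indicator ?S k / card ?S"
    unfolding U_E_def by (rule pmf_of_set) auto
  ultimately show ?thesis
    by (simp add: count_E_def indicator_def)
qed

lemma pmf_U_O_up1:
  assumes "m \<ge> 2"
  shows "pmf (U_O_up1 m) k = real (count_O_up1 m k) / (real m - 1)"
proof -
  let ?S = "(\<lambda>i. 2 * i) ` {1..m - 1}"
  have "?S = {k. even k \<and> 2 \<le> k \<and> k \<le> 2 * m - 2}"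
    by (auto elim!: evenE)
  moreover have "card ?S = m - 1"
    by (subst card_image) (auto simp: inj_on_def)
  moreover have "pmf (U_O_up1 m) k = indicator ?S k / card ?S"
    unfolding U_O_up1_def by (rule pmf_of_set) (use assms in auto)
  ultimately show ?thesis
    using assms by (simp add: count_O_up1_def indicator_def of_nat_diff)
qed

lemma W_mass_eq:
  assumes "1 \<le> j" "j < m"
  shows "W_mass j m k = real (count_W j m k) / (2 * real m)"
proof -
  have "(\<exists>i. 1 \<le> i \<and> i \<le> j - 1 \<and> k = 2 * i) \<longleftrightarrow> k \<noteq> 0 \<and> even k \<and> k < 2 * j"
    using assms by (auto elim!: evenE)
  moreover have "(\<exists>i. j + 1 \<le> i \<and> i \<le> m \<and> k = 2 * i - 1) \<longleftrightarrow> odd k \<and> 2 * j < k \<and> k < 2 * m"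
    by (auto elim!: oddE intro!: exI[of _ "k div 2 + 1"])
  ultimately show ?thesis
    using assms unfolding W_mass_def count_W_def by auto
qed

lemma pmf_W:
  assumes "1 \<le> j" "j < m"
  shows "pmf (W j m) k = real (count_W j m k) / (2 * real m)"
proof -
  have "2 * (\<Sum>k<2 * m + 1. count_W j m k) = mid_count (count_W j m) (2 * m + 1)"
    unfolding mid_count_def using assms by (simp add: count_W_def)
  also have "\<dots> = 4 * m"
    using assms by (simp add: mid_count_W)
  finally have "(\<Sum>k\<le>2 * m. W_mass j m k) = 1"
    using assms
    by (simp add: W_mass_eq lessThan_Suc_atMost sum_divide_distrib[symmetric] flip: of_nat_sum)
  then have "(\<integral>\<^sup>+k. W_mass j m k \<partial>count_space UNIV) = 1"
    using assms by (subst nn_integral_count_space'[where A="{..2 * m}"])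
      (auto simp: W_mass_eq count_W_def sum_ennreal)
  then show ?thesis
    using assms unfolding W_def by (subst pmf_embed_pmf) (auto simp: W_mass_eq)
qed

section \<open>Player 1 against the mixture\<close>

text \<open>The mass function of \<open>Y\<close> in case (b); case (a) is the instance \<open>m = 1\<close>, \<open>lU = 0\<close>, \<open>lam = 0\<close>, in
  which the junk value \<open>U_O_up1 1\<close> is multiplied by 0.\<close>
definition mixture_mass ::
    "nat \<Rightarrow> real \<Rightarrow> real \<Rightarrow> real \<Rightarrow> real \<Rightarrow> (nat \<Rightarrow> real) \<Rightarrow> nat \<Rightarrow> real" where
  "mixture_mass m b lO lE lU lam k =
     (1 - b / real m) * indicator {0} k +
     b / real m * (lO * pmf (U_O m) k + lE * pmf (U_E m) k + lU * pmf (U_O_up1 m) k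
              + (\<Sum>j=1..m-1. lam j * pmf (W j m) k))"

lemma mixture_mass_eq_counts:
  assumes "m \<ge> 1" "lU = 0 \<or> m \<ge> 2"
  shows "mixture_mass m b lO lE lU lam k =
     (1 - b / real m) * (real (of_bool (k = 0)) / 1) +
     b / real m * (lO * (real (count_O m k) / real m) + lE * (real (count_E m k) / (real m + 1))
              + lU * (real (count_O_up1 m k) / (real m - 1))
              + (\<Sum>j=1..m-1. lam j * (real (count_W j m k) / (2 * real m))))"
proof -
  have "lU * pmf (U_O_up1 m) k = lU * (real (count_O_up1 m k) / (real m - 1))"
    using assms by (auto simp: pmf_U_O_up1)
  moreover have "(\<Sum>j=1..m-1. lam j * pmf (W j m) k) =
      (\<Sum>j=1..m-1. lam j * (real (count_W j m k) / (2 * real m)))"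
    by (rule sum.cong) (auto simp: pmf_W)
  ultimately show ?thesis
    using assms unfolding mixture_mass_def by (simp add: pmf_U_O pmf_U_E)
qed

lemma mixture_mass_eq_0:
  assumes "m \<ge> 1" "lU = 0 \<or> m \<ge> 2" "2 * m < k"
  shows "mixture_mass m b lO lE lU lam k = 0"
proof -
  have "count_W j m k = 0" if "j \<in> {1..m-1}" for j
    using that assms by (auto simp: count_W_def)
  then show ?thesis
    using assms by (auto simp: mixture_mass_eq_counts count_O_def count_E_def count_O_up1_def)
qed

lemma mid_cdf_mixture_mass:
  fixes lam :: "nat \<Rightarrow> real"
  assumes "m \<ge> 1" "lU = 0 \<or> m \<ge> 2"
  shows "mid_cdf (mixture_mass m b lO lE lU lam) x =
     (1 - b / real m) * (if x = 0 then 1 / 2 else 1) +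
     b / real m * (lO * (real (min x (2 * m)) / (2 * real m))
              + lE * (real (min (x + 1) (2 * m + 2)) / (2 * (real m + 1)))
              + lU * (real (mid_count (count_O_up1 m) x) / (2 * (real m - 1)))
              + (\<Sum>j=1..m-1. lam j * real (mid_count (count_W j m) x)) / (4 * real m))"
  unfolding mixture_mass_eq_counts[OF assms, abs_def]
  by (simp only: mid_cdf_add mid_cdf_cmult mid_cdf_sum mid_cdf_count mid_count_O mid_count_E)
    (simp add: mid_count_delta0 sum_divide_distrib)

lemma sum_mid_count_W_le:
  fixes lam :: "nat \<Rightarrow> real"
  assumes "\<forall>j\<in>{1..m-1}. lam j \<ge> 0" "1 \<le> x"
  shows "(\<Sum>j=1..m-1. lam j * real (mid_count (count_W j m) x)) \<le> (\<Sum>j=1..m-1. lam j) * (2 * real x)"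
proof -
  have "(\<Sum>j=1..m-1. lam j * real (mid_count (count_W j m) x)) \<le> (\<Sum>j=1..m-1. lam j * (2 * real x))"
    by (rule sum_mono, rule mult_left_mono) (use assms in \<open>auto simp: mid_count_W\<close>)
  then show ?thesis
    by (simp only: sum_distrib_right)
qed

lemma sum_mid_count_W_odd:
  fixes lam :: "nat \<Rightarrow> real"
  assumes "odd x" "x \<le> 2 * m"
  shows "(\<Sum>j=1..m-1. lam j * real (mid_count (count_W j m) x)) = (\<Sum>j=1..m-1. lam j) * (2 * real x)"
proof -
  have "mid_count (count_W j m) x = 2 * x" if "j \<in> {1..m-1}" for j
  proof -
    have "x \<noteq> 0" "x \<noteq> 2 * j"
      using odd_pos[OF assms(1)] assms(1) by auto
    moreover have "1 \<le> j" "j < m"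
      using that by auto
    ultimately show ?thesis
      using assms by (simp add: mid_count_W)
  qed
  then have "(\<Sum>j=1..m-1. lam j * real (mid_count (count_W j m) x)) = (\<Sum>j=1..m-1. lam j * (2 * real x))"
    by simp
  then show ?thesis
    by (simp only: sum_distrib_right)
qed

lemma sum_mid_count_W_0:
  fixes lam :: "nat \<Rightarrow> real"
  shows "(\<Sum>j=1..m-1. lam j * real (mid_count (count_W j m) 0)) = (\<Sum>j=1..m-1. lam j)"
  by (rule sum.cong) (auto simp: mid_count_W)

lemma zero_bid_bound:
  fixes M b s lU :: real
  assumes "M \<ge> 2" "0 < b" "s \<ge> 0" "lU \<ge> 0" "s + lU \<le> 1"
    and "b > M - 1 \<longrightarrow> s / (2 * M) + lU / (M - 1) \<le> (M - b) / b"
  shows "b / M * (s / (4 * M) + lU / (2 * (M - 1))) \<le> (1 - b / M) / 2"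
proof -
  have "s / (2 * M) + lU / (M - 1) \<le> (M - b) / b"
  proof (cases "b > M - 1")
    case False
    have "s / (2 * M) + lU / (M - 1) \<le> (s + lU) / (M - 1)"
      using assms by (simp add: add_divide_distrib frac_le)
    also have "\<dots> \<le> 1 / (M - 1)"
      using assms by (simp add: divide_right_mono)
    also have "\<dots> \<le> (M - b) / b"
    proof -
      have "b * 1 \<le> (M - 1) * (M - b)"
        by (rule mult_mono) (use assms False in auto)
      then show ?thesis
        using assms by (simp add: field_simps)
    qed
    finally show ?thesis .
  qed (use assms in simp)
  then have "b / (2 * M) * (s / (2 * M) + lU / (M - 1)) \<le> b / (2 * M) * ((M - b) / b)"
    using assms by (intro mult_left_mono) auto
  moreover have "b / M * (s / (4 * M) + lU / (2 * (M - 1))) = b / (2 * M) * (s / (2 * M) + lU / (M - 1))"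
    using assms by (simp add: field_simps)
  moreover have "b / (2 * M) * ((M - b) / b) = (1 - b / M) / 2"
    using assms by (simp add: field_simps)
  ultimately show ?thesis
    by linarith
qed

context
  fixes m :: nat and b v1 lO lE lU :: real and lam :: "nat \<Rightarrow> real" and Y :: "nat pmf"
  assumes m: "m \<ge> 2" and b: "0 < b" "b \<le> real m" and v1: "v1 > 0"
    and l: "lO \<ge> 0" "lE \<ge> 0" "lU \<ge> 0" "\<forall>j\<in>{1..m-1}. lam j \<ge> 0"
    and total: "lO + lE + lU + (\<Sum>j=1..m-1. lam j) = 1"
    and slope: "lO / real m + lE / (real m + 1) + lU / (real m - 1) + 1 / real m * (\<Sum>j=1..m-1. lam j)
                = 2 * real m / (b * v1)"
    and zero_bid: "b > real m - 1 \<longrightarrow>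
                     1 / (2 * real m) * (\<Sum>j=1..m-1. lam j) + lU / (real m - 1) \<le> (real m - b) / b"
    and Y: "pmf Y = mixture_mass m b lO lE lU lam"
begin

text \<open>The combination of affine bounds on the mid-cdfs of the components of \<open>Y\<close>, each exact at the
  odd bids below \<open>2m\<close>.\<close>
definition affine_majorant :: "real \<Rightarrow> real" where
  "affine_majorant t = (1 - b / real m) + b / real m * (lO * (t / (2 * real m))
      + lE * ((t + 1) / (2 * (real m + 1))) + lU * ((t - 1) / (2 * (real m - 1)))
      + (\<Sum>j=1..m-1. lam j) * (2 * t) / (4 * real m))"

lemma affine_majorant_shift: "v1 * affine_majorant t - t = v1 * affine_majorant 0"
proof -
  let ?A = affine_majorant
  have "?A t = ?A 0 + b / real m * (t / 2) * (lO / real m + lE / (real m + 1) + lU / (real m - 1)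
      + 1 / real m * (\<Sum>j=1..m-1. lam j))"
    unfolding affine_majorant_def by (simp add: add_divide_distrib diff_divide_distrib algebra_simps)
  also have "\<dots> = ?A 0 + t / v1"
    unfolding slope using b v1 m by (simp add: field_simps)
  finally show ?thesis
    using v1 by (simp add: field_simps)
qed

lemma mid_cdf_Y: "mid_cdf (pmf Y) x =
     (1 - b / real m) * (if x = 0 then 1 / 2 else 1) +
     b / real m * (lO * (real (min x (2 * m)) / (2 * real m))
              + lE * (real (min (x + 1) (2 * m + 2)) / (2 * (real m + 1)))
              + lU * (real (mid_count (count_O_up1 m) x) / (2 * (real m - 1)))
              + (\<Sum>j=1..m-1. lam j * real (mid_count (count_W j m) x)) / (4 * real m))"
  unfolding Y using mid_cdf_mixture_mass m by simp

lemma mid_cdf_Y_le_affine_majorant: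
  assumes "1 \<le> x"
  shows "mid_cdf (pmf Y) x \<le> affine_majorant x"
proof -
  have "lO * (real (min x (2 * m)) / (2 * real m)) \<le> lO * (x / (2 * real m))"
    using l by (intro mult_left_mono divide_right_mono) auto
  moreover have "lE * (real (min (x + 1) (2 * m + 2)) / (2 * (real m + 1)))
      \<le> lE * ((x + 1) / (2 * (real m + 1)))"
    using l by (intro mult_left_mono divide_right_mono) auto
  moreover have "lU * (real (mid_count (count_O_up1 m) x) / (2 * (real m - 1)))
      \<le> lU * ((x - 1) / (2 * (real m - 1)))"
    using l m assms by (intro mult_left_mono divide_right_mono) (auto simp: mid_count_O_up1 of_nat_diff)
  moreover have "(\<Sum>j=1..m-1. lam j * real (mid_count (count_W j m) x)) / (4 * real m)
      \<le> (\<Sum>j=1..m-1. lam j) * (2 * real x) / (4 * real m)"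
    using sum_mid_count_W_le[OF l(4) assms] by (intro divide_right_mono) auto
  ultimately show ?thesis
    unfolding mid_cdf_Y affine_majorant_def using assms b m
    by (intro add_mono mult_left_mono[of _ _ "b / real m"]) (auto simp: add.commute)
qed

lemma mid_cdf_Y_odd:
  assumes "odd x" "x < 2 * m"
  shows "mid_cdf (pmf Y) x = affine_majorant x"
  unfolding mid_cdf_Y affine_majorant_def using assms m sum_mid_count_W_odd[where lam=lam]
  by (auto simp: mid_count_O_up1 of_nat_diff dest: odd_pos)

lemma mid_cdf_Y_0: "mid_cdf (pmf Y) 0 \<le> affine_majorant 0"
proof -
  let ?s = "\<Sum>j=1..m-1. lam j"
  have "?s \<ge> 0"
    using l(4) by (intro sum_nonneg) auto
  then have "b / real m * (?s / (4 * real m) + lU / (2 * (real m - 1))) \<le> (1 - b / real m) / 2"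
    using m b l total zero_bid by (intro zero_bid_bound) auto
  moreover have "mid_cdf (pmf Y) 0
      = (1 - b / real m) / 2 + b / real m * (lE / (2 * (real m + 1)) + ?s / (4 * real m))"
    unfolding mid_cdf_Y using sum_mid_count_W_0[where lam=lam and m=m] by (simp add: mid_count_O_up1 m)
  moreover have "affine_majorant 0
      = (1 - b / real m) + b / real m * (lE / (2 * (real m + 1)) - lU / (2 * (real m - 1)))"
    unfolding affine_majorant_def by simp
  ultimately show ?thesis
    by (simp only: distrib_left right_diff_distrib) argo
qed

lemma pure_payoff_le_affine_majorant: "pure_payoff v1 Y x \<le> v1 * affine_majorant 0"
proof (cases "x = 0")
  case True
  then show ?thesis
    using mid_cdf_Y_0 v1 by (simp add: pure_payoff_def)
next
  case False
  then have "v1 * mid_cdf (pmf Y) x \<le> v1 * affine_majorant x"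
    using mid_cdf_Y_le_affine_majorant v1 by simp
  then show ?thesis
    using affine_majorant_shift[of x] by (simp add: pure_payoff_def)
qed

lemma pure_payoff_odd_eq_affine_majorant:
  "odd x \<Longrightarrow> x < 2 * m \<Longrightarrow> pure_payoff v1 Y x = v1 * affine_majorant 0"
  using mid_cdf_Y_odd affine_majorant_shift by (simp add: pure_payoff_def)

lemma pure_payoff_mixture_m2:
  shows "pure_payoff v1 Y x \<le> pure_payoff v1 Y 1"
    and "odd x \<Longrightarrow> x < 2 * m \<Longrightarrow> pure_payoff v1 Y x = pure_payoff v1 Y 1"
  using pure_payoff_le_affine_majorant pure_payoff_odd_eq_affine_majorant[of 1] m
    pure_payoff_odd_eq_affine_majorant[of x] by auto

end

lemma pure_payoff_mixture_m1:
  fixes Y :: "nat pmf"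
  assumes b: "0 < b" "b \<le> 1" and v1: "v1 > 0"
    and l: "lO \<ge> 0" "lE \<ge> 0" "lO + lE = 1"
    and lower: "lE / 2 \<ge> 1 - 2 / (b * v1)" and upper: "lE / 2 \<le> 1 / b - 2 / (b * v1)"
    and Y: "pmf Y = mixture_mass 1 b lO lE 0 (\<lambda>_. 0)"
  shows "pure_payoff v1 Y x \<le> pure_payoff v1 Y 1"
proof -
  have mid: "mid_cdf (pmf Y) x = (1 - b) * (if x = 0 then 1 / 2 else 1)
      + b * (lO * (real (min x 2) / 2) + lE * (real (min (x + 1) 4) / 4))" for x
    unfolding Y using mid_cdf_mixture_mass[of 1 0 b lO lE "\<lambda>_. 0" x] by simp
  have lO: "lO = 1 - lE"
    using l by simp
  have mid_1: "mid_cdf (pmf Y) 1 = 1 - b / 2"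
    unfolding mid lO by (simp add: field_simps)
  have bid_1_beats_0: "v1 * (mid_cdf (pmf Y) 1 - mid_cdf (pmf Y) 0) \<ge> 1"
    unfolding mid_1 unfolding mid lO using upper b v1 by (simp add: field_simps)
  have bid_1_beats_2: "v1 * (mid_cdf (pmf Y) 2 - mid_cdf (pmf Y) 1) \<le> 1"
    unfolding mid_1 unfolding mid lO using lower b v1 by (simp add: field_simps)
  have bid_1_beats_large: "v1 * (1 - mid_cdf (pmf Y) 1) \<le> 2"
  proof -
    have "b * (lE * v1) \<le> b * v1"
      using l b v1 by (intro mult_left_mono) auto
    moreover have "b * (v1 * 2) \<le> 4 + b * (lE * v1)"
      using lower b v1 by (simp add: field_simps)
    ultimately show ?thesis
      unfolding mid_1 by (simp add: algebra_simps)
  qed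
  have mid_ge_3: "mid_cdf (pmf Y) x = 1" if "x \<ge> 3" for x
    unfolding mid lO using that by (simp add: field_simps)
  consider "x = 0" | "x = 1" | "x = 2" | "x \<ge> 3"
    by linarith
  then show ?thesis
  proof cases
    case 1
    then show ?thesis
      using bid_1_beats_0 by (simp add: pure_payoff_def right_diff_distrib)
  next
    case 3
    then show ?thesis
      using bid_1_beats_2 by (simp add: pure_payoff_def right_diff_distrib)
  next
    case 4
    then show ?thesis
      using bid_1_beats_large mid_ge_3[OF 4] by (simp add: pure_payoff_def right_diff_distrib)
  qed (simp add: pure_payoff_def)
qed

section \<open>Player 2 against \<open>U\<^sub>O\<^sup>m\<close> and the theorem\<close>

lemma set_pmf_U_O:
  assumes "m \<ge> 1"
  shows "set_pmf (U_O m) = {x. odd x \<and> x < 2 * m}"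
  using assms by (auto simp: set_pmf_iff pmf_U_O count_O_def)

lemma pure_payoff_U_O:
  assumes "m \<ge> 1"
  shows "pure_payoff (2 * real m) (U_O m) y = real (min y (2 * m)) - real y"
proof -
  have "pmf (U_O m) = (\<lambda>k. real (count_O m k) / real m)"
    using pmf_U_O[OF assms] by auto
  then show ?thesis
    using assms by (simp add: pure_payoff_def mid_cdf_count mid_count_O)
qed

lemma set_pmf_mixture_mass:
  assumes "pmf Y = mixture_mass m b lO lE lU lam" "m \<ge> 1" "lU = 0 \<or> m \<ge> 2"
  shows "set_pmf Y \<subseteq> {..2 * m}"
proof
  fix k
  assume "k \<in> set_pmf Y"
  then have "mixture_mass m b lO lE lU lam k \<noteq> 0"
    using assms(1) by (simp add: set_pmf_iff)
  then show "k \<in> {..2 * m}"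
    using mixture_mass_eq_0[OF assms(2,3)] by (meson atMost_iff not_le)
qed

lemma support_and_indifference_case_a:
  assumes b: "0 < b" "b \<le> real m" and v1: "v1 > 0" and m: "m = 1"
    and l: "lO \<ge> 0" "lE \<ge> 0" "lO + lE = 1"
    and bounds: "lE / 2 \<ge> 1 - 2 / (b * v1)" "lE / 2 \<le> 1 / b - 2 / (b * v1)"
    and pY: "\<forall>k. pmf Y k = (1 - b / real m) * indicator {0} k +
                 b / real m * (lO * pmf (U_O 1) k + lE * pmf (U_E 1) k)"
  shows "set_pmf Y \<subseteq> {..2 * m}"
    and "pure_payoff v1 Y x \<le> pure_payoff v1 Y 1"
    and "odd x \<Longrightarrow> x < 2 * m \<Longrightarrow> pure_payoff v1 Y x = pure_payoff v1 Y 1"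
proof -
  have Y: "pmf Y = mixture_mass 1 b lO lE 0 (\<lambda>_. 0)"
    using m pY by (auto simp: fun_eq_iff mixture_mass_def)
  show "set_pmf Y \<subseteq> {..2 * m}"
    using set_pmf_mixture_mass[OF Y] m by simp
  show "pure_payoff v1 Y x \<le> pure_payoff v1 Y 1"
    by (rule pure_payoff_mixture_m1[OF _ _ v1 l bounds Y]) (use b m in auto)
  assume "odd x" "x < 2 * m"
  then have "x = 1"
    using m by presburger
  then show "pure_payoff v1 Y x = pure_payoff v1 Y 1"
    by simp
qed

lemma support_and_indifference_case_b:
  fixes lam :: "nat \<Rightarrow> real"
  assumes b: "0 < b" "b \<le> real m" and v1: "v1 > 0" and m: "m \<ge> 2"
    and l: "lO \<ge> 0" "lE \<ge> 0" "lU \<ge> 0" "\<forall>j\<in>{1..m-1}. lam j \<ge> 0"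
    and total: "lO + lE + lU + (\<Sum>j=1..m-1. lam j) = 1"
    and slope: "lO / real m + lE / (real m + 1) + lU / (real m - 1) + 1 / real m * (\<Sum>j=1..m-1. lam j)
                = 2 * real m / (b * v1)"
    and zero_bid: "b > real m - 1 \<longrightarrow>
                     1 / (2 * real m) * (\<Sum>j=1..m-1. lam j) + lU / (real m - 1) \<le> (real m - b) / b"
    and pY: "\<forall>k. pmf Y k = (1 - b / real m) * indicator {0} k +
                 b / real m * (lO * pmf (U_O m) k + lE * pmf (U_E m) k
                   + lU * pmf (U_O_up1 m) k + (\<Sum>j=1..m-1. lam j * pmf (W j m) k))"
  shows "set_pmf Y \<subseteq> {..2 * m}"
    and "pure_payoff v1 Y x \<le> pure_payoff v1 Y 1"
    and "odd x \<Longrightarrow> x < 2 * m \<Longrightarrow> pure_payoff v1 Y x = pure_payoff v1 Y 1"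
proof -
  have Y: "pmf Y = mixture_mass m b lO lE lU lam"
    using pY by (simp add: fun_eq_iff mixture_mass_def)
  show "set_pmf Y \<subseteq> {..2 * m}"
    using set_pmf_mixture_mass[OF Y] m by simp
  show "pure_payoff v1 Y x \<le> pure_payoff v1 Y 1"
    and "odd x \<Longrightarrow> x < 2 * m \<Longrightarrow> pure_payoff v1 Y x = pure_payoff v1 Y 1"
    using pure_payoff_mixture_m2[OF m b v1 l total slope zero_bid Y] by blast+
qed

theorem lemma3:
  fixes v1 v2 b :: real and m :: nat and X Y :: "nat pmf"
  assumes v: "v1 \<ge> v2" "v2 > 0"
    and m1: "m \<ge> 1"
    and b: "0 < b" "b \<le> real m"
    and strat: "strategy X" "strategy Y"
    and meanX: "mean X = real m" and meanY: "mean Y = b"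
    and mv: "real m = v2 / 2"
    and lotto: "lotto_NE (real m) b X Y"
    and X_def: "X = U_O m"
    and Y_form:
      "(m = 1 \<and> (\<exists>lO lE :: real. lO \<ge> 0 \<and> lE \<ge> 0 \<and> lO + lE = 1 \<and>
          lE / 2 \<ge> 1 - 2 / (b * v1) \<and> lE / 2 \<le> 1 / b - 2 / (b * v1) \<and>
          (\<forall>k. pmf Y k = (1 - b / real m) * indicator {0} k +
                 b / real m * (lO * pmf (U_O 1) k + lE * pmf (U_E 1) k))))
       \<or>
       (m \<ge> 2 \<and> (\<exists>(lO::real) (lE::real) (lU::real) (lam :: nat \<Rightarrow> real).
          lO \<ge> 0 \<and> lE \<ge> 0 \<and> lU \<ge> 0 \<and> (\<forall>j\<in>{1..m-1}. lam j \<ge> 0) \<and>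
          lO + lE + lU + (\<Sum>j=1..m-1. lam j) = 1 \<and>
          lE / (real m + 1) + 1 / (2 * real m) * (\<Sum>j=1..m-1. lam j)
            \<le> real m / b * (1 - v2 / v1) \<and>
          lO / real m + lE / (real m + 1) + lU / (real m - 1)
            + 1 / real m * (\<Sum>j=1..m-1. lam j) = 2 * real m / (b * v1) \<and>
          (b > real m - 1 \<longrightarrow>
            1 / (2 * real m) * (\<Sum>j=1..m-1. lam j) + lU / (real m - 1) \<le> (real m - b) / b) \<and>
          (\<forall>k. pmf Y k = (1 - b / real m) * indicator {0} k +
                 b / real m * (lO * pmf (U_O m) k + lE * pmf (U_E m) k
                   + lU * pmf (U_O_up1 m) k + (\<Sum>j=1..m-1. lam j * pmf (W j m) k)))))"
  shows "allpay_NE v1 v2 X Y"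
proof -
  have v1: "v1 > 0"
    using v by simp
  have support: "set_pmf Y \<subseteq> {..2 * m}"
    using Y_form support_and_indifference_case_a(1)[OF b v1] support_and_indifference_case_b(1)[OF b v1]
    by meson
  have payoff_le: "\<And>x. pure_payoff v1 Y x \<le> pure_payoff v1 Y 1"
    using Y_form support_and_indifference_case_a(2)[OF b v1] support_and_indifference_case_b(2)[OF b v1]
    by meson
  have payoff_eq: "\<And>x. odd x \<Longrightarrow> x < 2 * m \<Longrightarrow> pure_payoff v1 Y x = pure_payoff v1 Y 1"
    using Y_form support_and_indifference_case_a(3)[OF b v1] support_and_indifference_case_b(3)[OF b v1]
    by meson
  have best_response_1: "allpay_payoff v1 X' Y \<le> allpay_payoff v1 X Y" if "strategy X'" for X'
    by (rule best_response_of_pure_payoff_bound[OF that strat(1) payoff_le])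
      (use payoff_eq set_pmf_U_O[OF m1] X_def in auto)
  have "v2 = 2 * real m"
    using mv by simp
  then have best_response_2: "allpay_payoff v2 Y' X \<le> allpay_payoff v2 Y X" if "strategy Y'" for Y'
    using support X_def pure_payoff_U_O[OF m1]
    by (intro best_response_of_pure_payoff_bound[OF that strat(2), where K=0]) auto
  show ?thesis
    unfolding allpay_NE_def using strat best_response_1 best_response_2 by blast
qed

end
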